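(* Let $\lambda(\varepsilon)$ be the real root of $\det\Delta_\varepsilon(z)=0$ defined for small $\varepsilon>0$ with $\lambda(\varepsilon)\to\lambda_0$ as $\varepsilon\to0^+$. For $\delta>0$ sufficiently small and any $\delta_1>0$, there exists $\varepsilon_0>0$ such that for $0<\varepsilon<\varepsilon_0$, $\lambda(\varepsilon)$ is the only root of $\det\Delta_\varepsilon(z)=0$ in the strip $\lambda_0-\delta\le\Re z\le\lambda_0+\delta_1$.
   Context: $L:C([-\tau,0];\mathbb{R}^N)\to\mathbb{R}^N$ is a bounded linear operator; $L(e^{z\cdot}I)$ denotes the complex $N\times N$ matrix whose $j$-th column is $L$ (extended complex-linearly) applied to $\theta\mapsto e^{z\theta}e_j$. Let $\Delta_\varepsilon(z)=\varepsilon^2z^2I-zI+L(e^{z\cdot}I)$ (so $\Delta_0(z)=L(e^{z\cdot}I)-zI$). Assume $\lambda_0>0$ is a real simple zero of $\det\Delta_0$ that is dominant ($\Re z<\lambda_0$ for all other zeros $z$ of $\det\Delta_0$). By the implicit function theorem, for small $\varepsilon>0$ there is a simple real zero $\lambda(\varepsilon)$ of $\det\Delta_\varepsilon$ with $\lambda(\varepsilon)\to\lambda_0$. *)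

theory Defs
  imports "HOL-Analysis.Analysis"
begin

text \<open>Elements of C([-tau,0];R^N) are represented as functions real => real^'n that are
  continuous on {-tau..0}; only their values on {-tau..0} matter.\<close>

definition bounded_linear_delay ::
  "real \<Rightarrow> ((real \<Rightarrow> real^'n) \<Rightarrow> real^'n) \<Rightarrow> bool" where
  "bounded_linear_delay \<tau> L \<longleftrightarrow>
     (\<forall>\<phi> \<psi>. (\<forall>\<theta>\<in>{-\<tau>..0}. \<phi> \<theta> = \<psi> \<theta>) \<longrightarrow> L \<phi> = L \<psi>) \<and>
     (\<forall>\<phi> \<psi>. continuous_on {-\<tau>..0} \<phi> \<and> continuous_on {-\<tau>..0} \<psi> \<longrightarrow>
        L (\<lambda>\<theta>. \<phi> \<theta> + \<psi> \<theta>) = L \<phi> + L \<psi>) \<and>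
     (\<forall>c \<phi>. continuous_on {-\<tau>..0} \<phi> \<longrightarrow> L (\<lambda>\<theta>. c *\<^sub>R \<phi> \<theta>) = c *\<^sub>R L \<phi>) \<and>
     (\<exists>K. \<forall>\<phi>. continuous_on {-\<tau>..0} \<phi> \<longrightarrow>
        norm (L \<phi>) \<le> K * (SUP \<theta>\<in>{-\<tau>..0}. norm (\<phi> \<theta>)))"

text \<open>Complex-linear extension: L(phi) = L(Re phi) + i L(Im phi).\<close>
definition cext :: "((real \<Rightarrow> real^'n) \<Rightarrow> real^'n) \<Rightarrow> (real \<Rightarrow> complex^'n) \<Rightarrow> complex^'n" where
  "cext L \<phi> = (\<chi> i. Complex (L (\<lambda>\<theta>. \<chi> k. Re (\<phi> \<theta> $ k)) $ i)
                               (L (\<lambda>\<theta>. \<chi> k. Im (\<phi> \<theta> $ k)) $ i))"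

text \<open>L(e^{z.} I): the j-th column is L applied to theta |-> e^{z theta} e_j.\<close>
definition Lexp :: "((real \<Rightarrow> real^'n) \<Rightarrow> real^'n) \<Rightarrow> complex \<Rightarrow> complex^'n^'n" where
  "Lexp L z = (\<chi> i j. cext L (\<lambda>\<theta>. axis j (exp (z * of_real \<theta>))) $ i)"

definition Delta :: "((real \<Rightarrow> real^'n) \<Rightarrow> real^'n) \<Rightarrow> real \<Rightarrow> complex \<Rightarrow> complex^'n^'n" where
  "Delta L \<epsilon> z = mat (of_real (\<epsilon>^2) * z^2 - z) + Lexp L z"

end

theory Submission
  imports Defs
begin

text \<open>
  Write F(e,z) = det Delta_e(z).  The entries of Delta_e(z) are polynomials in z
  plus the numbers L(theta^k e^{z theta}) (applied to coordinate vectors); these are entire in z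
  with derivative L(theta^(k+1) e^{z theta}), so F and dF/dz are jointly continuous in (e,z).
  Three facts about F then give the theorem:
  (1) Local injectivity: since dF/dz(0,lam0) is nonzero and dF/dz is jointly continuous, F(e,.)
      is injective on a fixed ball around lam0 for all small e; as lam(e) is a root tending to
      lam0, it is the only root in that ball.
  (2) A priori bound: a root z with Re z >= 0 has |e^2 z^2 - z| <= B, since the operator part
      of Delta_e(z) is bounded there; for Re z bounded above and e small this forces |z| <= 2B.
  (3) Zero-freeness away from lam0: by dominance F(0,.) has no zeros on the compact set of points
      with Re z >= lam0, |z| <= 2B+1 and |z - lam0| >= r/2, so by joint continuity F(e,.) has
      no zeros in a fixed neighbourhood of that set for small e; the neighbourhood contains the
      far part of the strip lam0 - delta <= Re z <= lam0 + delta1 once delta is small.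
\<close>

section \<open>Scalar entries of the delay operator and their complex extension\<close>

lemma bounded_linear_delay_bound:
  assumes L: "bounded_linear_delay \<tau> L" and tau: "\<tau> > 0"
  shows "\<exists>K\<ge>0. \<forall>\<phi> M. continuous_on {-\<tau>..0} \<phi> \<longrightarrow> (\<forall>\<theta>\<in>{-\<tau>..0}. norm (\<phi> \<theta>) \<le> M)
          \<longrightarrow> norm (L \<phi>) \<le> K * M"
proof -
  obtain K0 where K0: "\<And>\<phi>. continuous_on {-\<tau>..0} \<phi> \<Longrightarrow>
        norm (L \<phi>) \<le> K0 * (SUP \<theta>\<in>{-\<tau>..0}. norm (\<phi> \<theta>))"
    using L unfolding bounded_linear_delay_def by blast
  have "norm (L \<phi>) \<le> max K0 0 * M" if c: "continuous_on {-\<tau>..0} \<phi>"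
     and b: "\<forall>\<theta>\<in>{-\<tau>..0}. norm (\<phi> \<theta>) \<le> M" for \<phi> M
  proof -
    let ?S = "SUP \<theta>\<in>{-\<tau>..0}. norm (\<phi> \<theta>)"
    have bdd: "bdd_above ((\<lambda>\<theta>. norm (\<phi> \<theta>)) ` {-\<tau>..0})" using b by (auto intro: bdd_aboveI2)
    have "?S \<le> M" using tau b by (intro cSUP_least) auto
    moreover have "norm (\<phi> 0) \<le> ?S" using tau bdd by (intro cSUP_upper) auto
    then have "0 \<le> ?S" by (meson norm_ge_zero order_trans)
    moreover have "norm (L \<phi>) \<le> K0 * ?S" using K0 c by blast
    ultimately show ?thesis
      by (smt (verit) max.cobounded1 max.cobounded2 mult_left_mono mult_right_mono)
  qed
  then show ?thesis by (intro exI[of _ "max K0 0"]) auto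
qed

definition L_entry :: "((real \<Rightarrow> real^'n) \<Rightarrow> real^'n) \<Rightarrow> 'n \<Rightarrow> 'n \<Rightarrow> (real \<Rightarrow> real) \<Rightarrow> real" where
  "L_entry L i j v = L (\<lambda>\<theta>. axis j (v \<theta>)) $ i"

definition Lc_entry :: "((real \<Rightarrow> real^'n) \<Rightarrow> real^'n) \<Rightarrow> 'n \<Rightarrow> 'n \<Rightarrow> (real \<Rightarrow> complex) \<Rightarrow> complex" where
  "Lc_entry L i j u = Complex (L_entry L i j (\<lambda>\<theta>. Re (u \<theta>))) (L_entry L i j (\<lambda>\<theta>. Im (u \<theta>)))"

lemma axis_scaleR_eq: "axis j (x::real) = x *\<^sub>R axis j 1"
  by (simp add: vec_eq_iff axis_def)

lemma norm_axis_eq: "norm (axis j (x::real)) = \<bar>x\<bar>"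
  by (subst axis_scaleR_eq) simp

lemma continuous_on_axis: "continuous_on S v \<Longrightarrow> continuous_on S (\<lambda>\<theta>. axis j ((v::_\<Rightarrow>real) \<theta>))"
  by (subst axis_scaleR_eq) (intro continuous_intros)

lemma L_entry_add:
  assumes L: "bounded_linear_delay \<tau> L" and "continuous_on {-\<tau>..0} v" "continuous_on {-\<tau>..0} w"
  shows "L_entry L i j (\<lambda>\<theta>. v \<theta> + w \<theta>) = L_entry L i j v + L_entry L i j w"
proof -
  have "(\<lambda>\<theta>. axis j (v \<theta> + w \<theta>)) = (\<lambda>\<theta>. axis j (v \<theta>) + axis j (w \<theta>))"
    by (rule ext) (simp add: axis_def vec_eq_iff)
  moreover have "L (\<lambda>\<theta>. axis j (v \<theta>) + axis j (w \<theta>)) = L (\<lambda>\<theta>. axis j (v \<theta>)) + L (\<lambda>\<theta>. axis j (w \<theta>))"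
    using L assms(2,3) continuous_on_axis unfolding bounded_linear_delay_def by blast
  ultimately show ?thesis unfolding L_entry_def by simp
qed

lemma L_entry_scale:
  assumes L: "bounded_linear_delay \<tau> L" and "continuous_on {-\<tau>..0} v"
  shows "L_entry L i j (\<lambda>\<theta>. c * v \<theta>) = c * L_entry L i j v"
proof -
  have "(\<lambda>\<theta>. axis j (c * v \<theta>)) = (\<lambda>\<theta>. c *\<^sub>R axis j (v \<theta>))"
    by (rule ext) (simp add: axis_def vec_eq_iff)
  moreover have "L (\<lambda>\<theta>. c *\<^sub>R axis j (v \<theta>)) = c *\<^sub>R L (\<lambda>\<theta>. axis j (v \<theta>))"
    using L assms(2) continuous_on_axis unfolding bounded_linear_delay_def by blast
  ultimately show ?thesis unfolding L_entry_def by simp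
qed

lemma L_entry_bound:
  assumes L: "bounded_linear_delay \<tau> L" and tau: "\<tau> > 0"
  shows "\<exists>K\<ge>0. \<forall>i j v M. continuous_on {-\<tau>..0} v \<longrightarrow> (\<forall>\<theta>\<in>{-\<tau>..0}. \<bar>v \<theta>\<bar> \<le> M)
          \<longrightarrow> \<bar>L_entry L i j v\<bar> \<le> K * M"
proof -
  obtain K where K: "K \<ge> 0" "\<And>\<phi> M. continuous_on {-\<tau>..0} \<phi> \<Longrightarrow> (\<forall>\<theta>\<in>{-\<tau>..0}. norm (\<phi> \<theta>) \<le> M)
          \<Longrightarrow> norm (L \<phi>) \<le> K * M" using bounded_linear_delay_bound[OF L tau] by blast
  have "\<bar>L_entry L i j v\<bar> \<le> K * M"
    if "continuous_on {-\<tau>..0} v" "\<forall>\<theta>\<in>{-\<tau>..0}. \<bar>v \<theta>\<bar> \<le> M" for i j v M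
  proof -
    have "\<bar>L_entry L i j v\<bar> \<le> norm (L (\<lambda>\<theta>. axis j (v \<theta>)))" unfolding L_entry_def
      by (rule component_le_norm_cart)
    also have "\<dots> \<le> K * M" using that
      by (intro K(2) continuous_on_axis) (auto simp: norm_axis_eq)
    finally show ?thesis .
  qed
  with K show ?thesis by blast
qed

lemma Lc_entry_add:
  assumes L: "bounded_linear_delay \<tau> L" and "continuous_on {-\<tau>..0} u" "continuous_on {-\<tau>..0} w"
  shows "Lc_entry L i j (\<lambda>\<theta>. u \<theta> + w \<theta>) = Lc_entry L i j u + Lc_entry L i j w"
  using L_entry_add[OF L continuous_on_Re[OF assms(2)] continuous_on_Re[OF assms(3)]]
        L_entry_add[OF L continuous_on_Im[OF assms(2)] continuous_on_Im[OF assms(3)]]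
  by (simp add: Lc_entry_def complex_eq_iff)

lemma Lc_entry_scale:
  assumes L: "bounded_linear_delay \<tau> L" and u: "continuous_on {-\<tau>..0} u"
  shows "Lc_entry L i j (\<lambda>\<theta>. c * u \<theta>) = c * Lc_entry L i j u"
proof -
  note cR = continuous_on_Re[OF u] and cI = continuous_on_Im[OF u]
  have lin: "L_entry L i j (\<lambda>\<theta>. a * Re (u \<theta>) + b * Im (u \<theta>)) =
      a * L_entry L i j (\<lambda>\<theta>. Re (u \<theta>)) + b * L_entry L i j (\<lambda>\<theta>. Im (u \<theta>))" for a b
  proof -
    have "continuous_on {-\<tau>..0} (\<lambda>\<theta>. a * Re (u \<theta>))" "continuous_on {-\<tau>..0} (\<lambda>\<theta>. b * Im (u \<theta>))"
      using cR cI by (auto intro!: continuous_intros)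
    then show ?thesis using L_entry_add[OF L] L_entry_scale[OF L cR] L_entry_scale[OF L cI] by simp
  qed
  have re: "(\<lambda>\<theta>. Re (c * u \<theta>)) = (\<lambda>\<theta>. Re c * Re (u \<theta>) + (- Im c) * Im (u \<theta>))"
    by auto
  have im: "(\<lambda>\<theta>. Im (c * u \<theta>)) = (\<lambda>\<theta>. Im c * Re (u \<theta>) + Re c * Im (u \<theta>))"
    by (auto simp: algebra_simps)
  show ?thesis unfolding Lc_entry_def re im lin by (simp add: complex_eq_iff)
qed

lemma Lc_entry_lin:
  assumes L: "bounded_linear_delay \<tau> L" and "continuous_on {-\<tau>..0} u" "continuous_on {-\<tau>..0} w"
  shows "Lc_entry L i j (\<lambda>\<theta>. u \<theta> + c * w \<theta>) = Lc_entry L i j u + c * Lc_entry L i j w"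
proof -
  have "continuous_on {-\<tau>..0} (\<lambda>\<theta>. c * w \<theta>)" using assms(3) by (intro continuous_intros)
  then show ?thesis using Lc_entry_add[OF L assms(2)] Lc_entry_scale[OF L assms(3)] by simp
qed

lemma Lc_entry_bound:
  assumes L: "bounded_linear_delay \<tau> L" and tau: "\<tau> > 0"
  shows "\<exists>K\<ge>0. \<forall>i j u M. continuous_on {-\<tau>..0} u \<longrightarrow> (\<forall>\<theta>\<in>{-\<tau>..0}. norm (u \<theta>) \<le> M)
          \<longrightarrow> norm (Lc_entry L i j u) \<le> K * M"
proof -
  obtain K where K: "K \<ge> 0" "\<And>i j v M. continuous_on {-\<tau>..0} v \<Longrightarrow> (\<forall>\<theta>\<in>{-\<tau>..0}. \<bar>v \<theta>\<bar> \<le> M)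
          \<Longrightarrow> \<bar>L_entry L i j v\<bar> \<le> K * M" using L_entry_bound[OF L tau] by blast
  have "norm (Lc_entry L i j u) \<le> (2*K) * M"
    if u: "continuous_on {-\<tau>..0} u" and b: "\<forall>\<theta>\<in>{-\<tau>..0}. norm (u \<theta>) \<le> M" for i j u M
  proof -
    have "\<bar>L_entry L i j (\<lambda>\<theta>. Re (u \<theta>))\<bar> \<le> K * M"
      using b abs_Re_le_cmod order_trans by (intro K(2) continuous_on_Re[OF u]) blast
    moreover have "\<bar>L_entry L i j (\<lambda>\<theta>. Im (u \<theta>))\<bar> \<le> K * M"
      using b abs_Im_le_cmod order_trans by (intro K(2) continuous_on_Im[OF u]) blast
    moreover have "norm (Lc_entry L i j u) \<le>
        \<bar>L_entry L i j (\<lambda>\<theta>. Re (u \<theta>))\<bar> + \<bar>L_entry L i j (\<lambda>\<theta>. Im (u \<theta>))\<bar>"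
      unfolding Lc_entry_def using cmod_le[of "Complex _ _"] by simp
    ultimately show ?thesis by simp
  qed
  with K show ?thesis by (intro exI[of _ "2*K"]) auto
qed

lemma Lexp_entry: "Lexp L z $ i $ j = Lc_entry L i j (\<lambda>\<theta>. exp (z * of_real \<theta>))"
proof -
  have "(\<lambda>\<theta>. \<chi> k. Re (axis j (exp (z * of_real \<theta>)) $ k)) = (\<lambda>\<theta>. axis j (Re (exp (z * of_real \<theta>))))"
       "(\<lambda>\<theta>. \<chi> k. Im (axis j (exp (z * of_real \<theta>)) $ k)) = (\<lambda>\<theta>. axis j (Im (exp (z * of_real \<theta>))))"
    by (rule ext, simp add: vec_eq_iff axis_def)+
  then show ?thesis unfolding Lexp_def cext_def Lc_entry_def L_entry_def by simp
qed

section \<open>The moments L(theta^k e^{z theta}) are entire\<close>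

lemma exp_minus1_bound:
  fixes w :: complex assumes "norm w \<le> 1" shows "norm (exp w - 1) \<le> 3 * norm w"
proof -
  have "norm (exp w - exp 0) \<le> 3 * norm (w - 0)"
  proof (rule field_differentiable_bound[of "cball 0 1" exp exp])
    fix z :: complex assume "z \<in> cball 0 1"
    then have "norm (exp z) \<le> exp 1" using norm_exp[of z] by (meson exp_le_cancel_iff mem_cball_0 order_trans)
    then show "norm (exp z) \<le> 3" using exp_le by linarith
  qed (use assms in \<open>auto intro!: derivative_eq_intros\<close>)
  then show ?thesis by simp
qed

text \<open>Quadratic remainder of the exponential, the source of differentiability of the moments.\<close>
lemma exp_remainder_bound:
  fixes w :: complex assumes "norm w \<le> 1" shows "norm (exp w - 1 - w) \<le> 3 * (norm w)^2"
proof -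
  have "norm ((exp w - w) - (exp 0 - 0)) \<le> (3 * norm w) * norm (w - 0)"
  proof (rule field_differentiable_bound[of "cball 0 (norm w)" "\<lambda>z. exp z - z" "\<lambda>z. exp z - 1"])
    fix z :: complex assume "z \<in> cball 0 (norm w)"
    then show "norm (exp z - 1) \<le> 3 * norm w" using exp_minus1_bound[of z] assms by simp
  qed (use assms in \<open>auto intro!: derivative_eq_intros\<close>)
  then show ?thesis by (simp add: power2_eq_square algebra_simps)
qed

lemma has_field_derivative_quadratic_remainder:
  fixes f :: "complex \<Rightarrow> complex"
  assumes d: "d > 0"
    and rem: "\<And>y. norm (y - z) < d \<Longrightarrow> norm (f y - f z - (y - z) * D) \<le> C * (norm (y - z))^2"
  shows "(f has_field_derivative D) (at z)"
proof -
  have "((\<lambda>y. (f y - f z) / (y - z) - D) \<longlongrightarrow> 0) (at z)"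
  proof (rule Lim_null_comparison)
    show "\<forall>\<^sub>F y in at z. norm ((f y - f z) / (y - z) - D) \<le> C * norm (y - z)"
      unfolding eventually_at
    proof (intro exI[of _ d] conjI ballI impI)
      fix y assume y: "y \<noteq> z \<and> dist y z < d"
      have "(f y - f z) / (y - z) - D = (f y - f z - (y - z) * D) / (y - z)"
        using y by (simp add: field_simps)
      also have "norm \<dots> \<le> C * (norm (y - z))^2 / norm (y - z)"
        unfolding norm_divide using rem[of y] y by (intro divide_right_mono) (auto simp: dist_norm)
      finally show "norm ((f y - f z) / (y - z) - D) \<le> C * norm (y - z)"
        using y by (simp add: power2_eq_square)
    qed (use d in auto)
    have "((\<lambda>y. C * norm (y - z)) \<longlongrightarrow> C * norm (z - z)) (at z)"
      by (intro tendsto_intros)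
    then show "((\<lambda>y. C * norm (y - z)) \<longlongrightarrow> 0) (at z)" by simp
  qed
  then show ?thesis unfolding has_field_derivative_iff by (simp add: LIM_zero_iff)
qed

definition L_moment :: "((real \<Rightarrow> real^'n) \<Rightarrow> real^'n) \<Rightarrow> 'n \<Rightarrow> 'n \<Rightarrow> nat \<Rightarrow> complex \<Rightarrow> complex" where
  "L_moment L i j k z = Lc_entry L i j (\<lambda>\<theta>. of_real \<theta> ^ k * exp (z * of_real \<theta>))"

lemma moment_remainder_integrand_bound:
  fixes z h :: complex
  assumes th: "\<bar>\<theta>\<bar> \<le> \<tau>" and h: "norm h * \<tau> \<le> 1"
  shows "norm (of_real \<theta> ^ k * exp (z * of_real \<theta>) * (exp (h * of_real \<theta>) - 1 - h * of_real \<theta>))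
           \<le> \<tau>^k * exp (norm z * \<tau>) * 3 * \<tau>^2 * (norm h)^2"
proof -
  have tau: "\<tau> \<ge> 0" using th by linarith
  have n1: "norm (of_real \<theta> ^ k :: complex) \<le> \<tau>^k"
    by (simp add: norm_power power_mono th)
  have "norm (exp (z * of_real \<theta>)) \<le> exp (norm (z * of_real \<theta>))" by (rule norm_exp)
  also have "\<dots> \<le> exp (norm z * \<tau>)" using th by (simp add: norm_mult mult_left_mono)
  finally have n2: "norm (exp (z * of_real \<theta>)) \<le> exp (norm z * \<tau>)" .
  have nh: "norm (h * of_real \<theta>) \<le> norm h * \<tau>" using th by (simp add: norm_mult mult_left_mono)
  have "norm (exp (h * of_real \<theta>) - 1 - h * of_real \<theta>) \<le> 3 * (norm (h * of_real \<theta>))^2"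
    using nh h by (intro exp_remainder_bound) linarith
  also have "\<dots> \<le> 3 * (norm h * \<tau>)^2" using nh by (intro mult_left_mono power_mono) auto
  finally have n3: "norm (exp (h * of_real \<theta>) - 1 - h * of_real \<theta>) \<le> 3 * (norm h * \<tau>)^2" .
  have "norm (of_real \<theta> ^ k * exp (z * of_real \<theta>) * (exp (h * of_real \<theta>) - 1 - h * of_real \<theta>))
      \<le> \<tau>^k * exp (norm z * \<tau>) * (3 * (norm h * \<tau>)^2)"
    unfolding norm_mult by (intro mult_mono n1 n2 n3) (auto simp: tau)
  then show ?thesis by (simp add: power_mult_distrib mult_ac)
qed

lemma L_moment_deriv:
  assumes L: "bounded_linear_delay \<tau> L" and tau: "\<tau> > 0"
  shows "(L_moment L i j k has_field_derivative L_moment L i j (Suc k) z) (at z)"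
proof -
  obtain K where K: "\<And>i j u M. continuous_on {-\<tau>..0} u \<Longrightarrow> (\<forall>\<theta>\<in>{-\<tau>..0}. norm (u \<theta>) \<le> M)
          \<Longrightarrow> norm (Lc_entry L i j u) \<le> K * M" using Lc_entry_bound[OF L tau] by blast
  define C where "C = \<tau>^k * exp (norm z * \<tau>) * 3 * \<tau>^2"
  show ?thesis
  proof (rule has_field_derivative_quadratic_remainder[where d = "1 / \<tau>" and C = "K * C"])
    show "1 / \<tau> > 0" using tau by simp
    fix y assume y: "norm (y - z) < 1 / \<tau>"
    define h where "h = y - z"
    have h: "norm h * \<tau> \<le> 1" using y tau by (simp add: h_def field_simps)
    have cts: "continuous_on {-\<tau>..0} (\<lambda>\<theta>. of_real \<theta> ^ m * exp (x * of_real \<theta>) :: complex)"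
      for m and x :: complex by (intro continuous_intros)
    have expand: "(of_real \<theta> ^ k * exp (y * of_real \<theta>) + (-1) * (of_real \<theta> ^ k * exp (z * of_real \<theta>)))
           + (- h) * (of_real \<theta> ^ Suc k * exp (z * of_real \<theta>)) =
           of_real \<theta> ^ k * exp (z * of_real \<theta>) * (exp (h * of_real \<theta>) - 1 - h * of_real \<theta>)"
      for \<theta> :: real
    proof -
      have "exp (y * of_real \<theta>) = exp (z * of_real \<theta>) * exp (h * of_real \<theta>)"
        by (simp add: h_def exp_add[symmetric] algebra_simps)
      then show ?thesis by (simp add: algebra_simps)
    qed
    have "L_moment L i j k y - L_moment L i j k z - h * L_moment L i j (Suc k) z =
        Lc_entry L i j (\<lambda>\<theta>. of_real \<theta> ^ k * exp (z * of_real \<theta>) * (exp (h * of_real \<theta>) - 1 - h * of_real \<theta>))"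
      unfolding L_moment_def expand[symmetric]
      by (subst Lc_entry_lin[OF L _ cts], intro continuous_intros, subst Lc_entry_lin[OF L cts cts])
         (simp add: algebra_simps)
    also have "norm \<dots> \<le> K * (C * (norm h)^2)"
      using moment_remainder_integrand_bound[OF _ h] unfolding C_def
      by (intro K) (auto intro!: continuous_intros)
    finally show "norm (L_moment L i j k y - L_moment L i j k z - (y - z) * L_moment L i j (Suc k) z)
        \<le> (K * C) * (norm (y - z))^2" by (simp add: h_def mult.assoc)
  qed
qed

lemma L_moment_cont:
  assumes L: "bounded_linear_delay \<tau> L" and tau: "\<tau> > 0"
  shows "continuous_on S (L_moment L i j k)"
  by (rule DERIV_continuous_on, rule has_field_derivative_at_within, rule L_moment_deriv[OF L tau])

section \<open>The characteristic function det Delta and its derivative\<close>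

definition delta_entry :: "((real \<Rightarrow> real^'n) \<Rightarrow> real^'n) \<Rightarrow> real \<Rightarrow> 'n \<Rightarrow> 'n \<Rightarrow> complex \<Rightarrow> complex" where
  "delta_entry L \<epsilon> i j z = (if i = j then of_real (\<epsilon>^2) * z^2 - z else 0) + L_moment L i j 0 z"

definition delta_entry' :: "((real \<Rightarrow> real^'n) \<Rightarrow> real^'n) \<Rightarrow> real \<Rightarrow> 'n \<Rightarrow> 'n \<Rightarrow> complex \<Rightarrow> complex" where
  "delta_entry' L \<epsilon> i j z = (if i = j then 2 * of_real (\<epsilon>^2) * z - 1 else 0) + L_moment L i j 1 z"

definition charf :: "((real \<Rightarrow> real^'n) \<Rightarrow> real^'n) \<Rightarrow> real \<Rightarrow> complex \<Rightarrow> complex" where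
  "charf L \<epsilon> z = (\<Sum>p\<in>{p. p permutes (UNIV::'n set)}. of_int (sign p) *
      (\<Prod>i\<in>UNIV. delta_entry L \<epsilon> i (p i) z))"

definition charf' :: "((real \<Rightarrow> real^'n) \<Rightarrow> real^'n) \<Rightarrow> real \<Rightarrow> complex \<Rightarrow> complex" where
  "charf' L \<epsilon> z = (\<Sum>p\<in>{p. p permutes (UNIV::'n set)}. of_int (sign p) *
      (\<Sum>k\<in>UNIV. delta_entry' L \<epsilon> k (p k) z * (\<Prod>i\<in>UNIV-{k}. delta_entry L \<epsilon> i (p i) z)))"

lemma Delta_entry: "Delta L \<epsilon> z $ i $ j = delta_entry L \<epsilon> i j z"
  unfolding Delta_def delta_entry_def L_moment_def by (simp add: Lexp_entry mat_def)

lemma det_Delta: "det (Delta L \<epsilon> z) = charf L \<epsilon> z"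
  unfolding det_def charf_def Delta_entry ..

lemma delta_entry_deriv:
  assumes L: "bounded_linear_delay \<tau> L" and tau: "\<tau> > 0"
  shows "(delta_entry L \<epsilon> i j has_field_derivative delta_entry' L \<epsilon> i j z) (at z)"
  unfolding delta_entry_def delta_entry'_def
  by (cases "i = j") (auto intro!: derivative_eq_intros L_moment_deriv[OF L tau])

lemma charf_deriv:
  assumes L: "bounded_linear_delay \<tau> L" and tau: "\<tau> > 0"
  shows "(charf L \<epsilon> has_field_derivative charf' L \<epsilon> z) (at z)"
  unfolding charf_def[abs_def] charf'_def
  by (intro DERIV_sum DERIV_cmult has_field_derivative_prod delta_entry_deriv[OF L tau])

lemma charf_cont:
  assumes L: "bounded_linear_delay \<tau> L" and tau: "\<tau> > 0"
  shows "continuous_on S (\<lambda>p::real\<times>complex. charf L (fst p) (snd p))"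
    and "continuous_on S (\<lambda>p::real\<times>complex. charf' L (fst p) (snd p))"
proof -
  have [continuous_intros]: "continuous_on S (\<lambda>p::real\<times>complex. L_moment L i j k (snd p))" for i j k
    by (rule continuous_on_compose2[OF L_moment_cont[OF L tau, of UNIV]]) (auto intro: continuous_intros)
  have [continuous_intros]: "continuous_on S (\<lambda>x. if b then f x else 0)" if "continuous_on S f"
    for b and f :: "real \<times> complex \<Rightarrow> complex"
    using that by (cases b) auto
  show "continuous_on S (\<lambda>p::real\<times>complex. charf L (fst p) (snd p))"
    unfolding charf_def delta_entry_def by (intro continuous_intros)
  show "continuous_on S (\<lambda>p::real\<times>complex. charf' L (fst p) (snd p))"
    unfolding charf'_def delta_entry_def delta_entry'_def by (intro continuous_intros)
qed

section \<open>Perturbation of roots in a one-parameter family\<close>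

text \<open>If dF/dz is jointly continuous at (0,z0) and nonzero there, then F(e,.) is injective on a
  common ball around z0 for all small e: F(e,z) - c z is a contraction-like map there.\<close>
lemma family_locally_injective:
  fixes F F' :: "real \<Rightarrow> complex \<Rightarrow> complex"
  assumes deriv: "\<And>\<epsilon> z. (F \<epsilon> has_field_derivative F' \<epsilon> z) (at z)"
    and cont: "isCont (\<lambda>p. F' (fst p) (snd p)) (0, z0)"
    and nz: "F' 0 z0 \<noteq> 0"
  shows "\<exists>r>0. \<forall>\<epsilon> z w. \<bar>\<epsilon>\<bar> < r \<longrightarrow> z \<in> ball z0 r \<longrightarrow> w \<in> ball z0 r \<longrightarrow> F \<epsilon> z = F \<epsilon> w \<longrightarrow> z = w"
proof -
  define c where "c = F' 0 z0"
  have "norm c / 2 > 0" using nz by (simp add: c_def)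
  from cont[unfolded continuous_at_eps_delta, rule_format, OF this, unfolded fst_conv snd_conv, folded c_def]
  obtain d where d: "d > 0"
    and close: "\<And>p. dist p (0, z0) < d \<Longrightarrow> dist (F' (fst p) (snd p)) c < norm c / 2"
    by blast
  have "z = w" if e: "\<bar>\<epsilon>\<bar> < d/2" and zw: "z \<in> ball z0 (d/2)" "w \<in> ball z0 (d/2)"
    and eq: "F \<epsilon> z = F \<epsilon> w" for \<epsilon> z w
  proof -
    have "norm ((F \<epsilon> z - c * z) - (F \<epsilon> w - c * w)) \<le> norm c / 2 * norm (z - w)"
    proof (rule field_differentiable_bound[of "ball z0 (d/2)" _ "\<lambda>x. F' \<epsilon> x - c"])
      fix x assume x: "x \<in> ball z0 (d/2)"
      show "((\<lambda>x. F \<epsilon> x - c * x) has_field_derivative F' \<epsilon> x - c) (at x within ball z0 (d/2))"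
        using DERIV_diff[OF has_field_derivative_at_within[OF deriv] DERIV_cmult_Id] .
      have "dist (\<epsilon>, x) (0, z0) \<le> norm \<epsilon> + norm (x - z0)"
        unfolding dist_norm using norm_Pair_le[of \<epsilon> "x - z0"] by simp
      also have "\<dots> < d" using e x by (simp add: dist_norm norm_minus_commute)
      finally show "norm (F' \<epsilon> x - c) \<le> norm c / 2"
        using close[of "(\<epsilon>, x)"] by (simp add: dist_norm)
    qed (use zw in auto)
    also have "(F \<epsilon> z - c * z) - (F \<epsilon> w - c * w) = - (c * (z - w))"
      using eq by (simp add: algebra_simps)
    finally have "norm c * norm (z - w) \<le> 0" by (simp add: norm_mult)
    then show ?thesis using nz by (simp add: c_def mult_le_0_iff)
  qed
  then show ?thesis using half_gt_zero[OF d] by blast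
qed

lemma eventually_unique_root_near:
  fixes F F' :: "real \<Rightarrow> complex \<Rightarrow> complex"
  assumes deriv: "\<And>\<epsilon> z. (F \<epsilon> has_field_derivative F' \<epsilon> z) (at z)"
    and cont: "isCont (\<lambda>p. F' (fst p) (snd p)) (0, z0)"
    and nz: "F' 0 z0 \<noteq> 0"
    and root: "\<forall>\<^sub>F \<epsilon> in at_right 0. F \<epsilon> (\<zeta> \<epsilon>) = 0"
    and lim: "(\<zeta> \<longlongrightarrow> z0) (at_right 0)"
  shows "\<exists>r>0. \<forall>\<^sub>F \<epsilon> in at_right 0. \<forall>z. norm (z - z0) < r \<longrightarrow> F \<epsilon> z = 0 \<longrightarrow> z = \<zeta> \<epsilon>"
proof -
  obtain r where r: "r > 0" and inj: "\<And>\<epsilon> z w. \<bar>\<epsilon>\<bar> < r \<Longrightarrow> z \<in> ball z0 r \<Longrightarrow> w \<in> ball z0 r \<Longrightarrow>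
      F \<epsilon> z = F \<epsilon> w \<Longrightarrow> z = w"
    using family_locally_injective[OF deriv cont nz] by blast
  have small: "\<forall>\<^sub>F \<epsilon> in at_right 0. \<epsilon> < r"
    using r by (intro eventually_at_right_field[THEN iffD2]) auto
  have "\<forall>\<^sub>F \<epsilon> in at_right 0. \<forall>z. norm (z - z0) < r \<longrightarrow> F \<epsilon> z = 0 \<longrightarrow> z = \<zeta> \<epsilon>"
    using root tendstoD[OF lim r] small eventually_at_right_less[of 0]
  proof eventually_elim
    case (elim \<epsilon>)
    show ?case
    proof (intro allI impI)
      fix z assume z: "norm (z - z0) < r" "F \<epsilon> z = 0"
      show "z = \<zeta> \<epsilon>"
      proof (rule inj)
        show "\<bar>\<epsilon>\<bar> < r" using elim by simp
        show "z \<in> ball z0 r" "\<zeta> \<epsilon> \<in> ball z0 r"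
          using z elim by (auto simp: dist_norm norm_minus_commute)
        show "F \<epsilon> z = F \<epsilon> (\<zeta> \<epsilon>)" using z elim by simp
      qed
    qed
  qed
  with r show ?thesis by blast
qed

lemma family_zero_free_near_compact:
  fixes F :: "real \<Rightarrow> complex \<Rightarrow> complex"
  assumes cont: "continuous_on UNIV (\<lambda>p. F (fst p) (snd p))"
    and K: "compact K" and nz: "\<And>w. w \<in> K \<Longrightarrow> F 0 w \<noteq> 0"
  shows "\<exists>d>0. \<forall>\<epsilon> z w. \<bar>\<epsilon>\<bar> < d \<longrightarrow> w \<in> K \<longrightarrow> dist z w < d \<longrightarrow> F \<epsilon> z \<noteq> 0"
proof -
  have "compact ((\<lambda>w. (0::real, w)) ` K)"
    using K by (intro compact_continuous_image continuous_intros)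
  moreover have "closed {p. F (fst p) (snd p) = 0}"
    using cont by (intro closed_Collect_eq continuous_intros) (auto simp: continuous_on_eq_continuous_at)
  moreover have "(\<lambda>w. (0, w)) ` K \<inter> {p. F (fst p) (snd p) = 0} = {}" using nz by auto
  ultimately obtain d where d: "d > 0"
    and sep: "\<forall>x\<in>(\<lambda>w. (0, w)) ` K. \<forall>p\<in>{p. F (fst p) (snd p) = 0}. d \<le> dist x p"
    using separate_compact_closed by blast
  have "F \<epsilon> z \<noteq> 0" if "\<bar>\<epsilon>\<bar> < d/2" "w \<in> K" "dist z w < d/2" for \<epsilon> z w
  proof
    assume "F \<epsilon> z = 0"
    then have "d \<le> dist (0, w) (\<epsilon>, z)" using sep that(2) by auto
    also have "\<dots> \<le> norm \<epsilon> + norm (w - z)"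
      unfolding dist_norm using norm_Pair_le[of "- \<epsilon>" "w - z"] by simp
    finally show False using that by (simp add: dist_norm norm_minus_commute)
  qed
  then show ?thesis using d by (intro exI[of _ "d/2"]) auto
qed

lemma eventually_roots_in_strip_near:
  fixes F :: "real \<Rightarrow> complex \<Rightarrow> complex"
  assumes cont: "continuous_on UNIV (\<lambda>p. F (fst p) (snd p))"
    and dominant: "\<And>z. F 0 z = 0 \<Longrightarrow> z \<noteq> of_real lam0 \<Longrightarrow> Re z < lam0"
    and bounded: "\<And>X. \<forall>\<^sub>F \<epsilon> in at_right 0. \<forall>z. a \<le> Re z \<longrightarrow> Re z \<le> X \<longrightarrow> F \<epsilon> z = 0 \<longrightarrow> norm z \<le> R"
    and a: "a < lam0" and r: "r > 0"
  shows "\<exists>\<delta>0>0. \<forall>\<delta> \<delta>1. 0 < \<delta> \<longrightarrow> \<delta> < \<delta>0 \<longrightarrow> (\<forall>\<^sub>F \<epsilon> in at_right 0. \<forall>z.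
           lam0 - \<delta> \<le> Re z \<longrightarrow> Re z \<le> lam0 + \<delta>1 \<longrightarrow> F \<epsilon> z = 0 \<longrightarrow> norm (z - of_real lam0) < r)"
proof -
  define K where "K = {z. norm z \<le> R + 1 \<and> lam0 \<le> Re z \<and> r/2 \<le> norm (z - of_real lam0)}"
  have "closed K" unfolding K_def
    by (intro closed_Collect_conj closed_Collect_le continuous_intros)
  moreover have "bounded K" unfolding K_def bounded_iff by auto
  ultimately have "compact K" by (simp add: compact_eq_bounded_closed)
  moreover have "F 0 w \<noteq> 0" if "w \<in> K" for w
    using dominant[of w] that r by (force simp: K_def)
  ultimately obtain d where d: "d > 0"
    and zero_free: "\<And>\<epsilon> z w. \<bar>\<epsilon>\<bar> < d \<Longrightarrow> w \<in> K \<Longrightarrow> dist z w < d \<Longrightarrow> F \<epsilon> z \<noteq> 0"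
    using family_zero_free_near_compact[OF cont] by blast
  define \<delta>0 where "\<delta>0 = min d (min (r/2) (min (lam0 - a) 1))"
  show ?thesis
  proof (intro exI[of _ \<delta>0] conjI allI impI)
    show "\<delta>0 > 0" using d r a by (simp add: \<delta>0_def)
    fix \<delta> \<delta>1 :: real assume \<delta>: "0 < \<delta>" "\<delta> < \<delta>0"
    then have small: "\<delta> < d" "\<delta> < r/2" "\<delta> < lam0 - a" "\<delta> < 1" by (auto simp: \<delta>0_def)
    have "\<forall>\<^sub>F \<epsilon> in at_right 0. \<epsilon> < d"
      using d by (intro eventually_at_right_field[THEN iffD2]) auto
    with bounded[of "lam0 + \<delta>1"] eventually_at_right_less[of 0]
    show "\<forall>\<^sub>F \<epsilon> in at_right 0. \<forall>z. lam0 - \<delta> \<le> Re z \<longrightarrow> Re z \<le> lam0 + \<delta>1 \<longrightarrow>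
        F \<epsilon> z = 0 \<longrightarrow> norm (z - of_real lam0) < r"
    proof eventually_elim
      case (elim \<epsilon>)
      show ?case
      proof (intro allI impI)
        fix z assume z: "lam0 - \<delta> \<le> Re z" "Re z \<le> lam0 + \<delta>1" "F \<epsilon> z = 0"
        show "norm (z - of_real lam0) < r"
        proof (rule ccontr)
          assume far: "\<not> norm (z - of_real lam0) < r"
          \<comment> \<open>push z horizontally into the half-plane Re w \<ge> lam0, moving it by at most delta\<close>
          define w where "w = z + of_real (max 0 (lam0 - Re z))"
          have zw: "dist z w \<le> \<delta>" using z(1) \<delta> by (simp add: w_def dist_norm)
          have "a \<le> Re z" using z(1) small by linarith
          then have "norm z \<le> R" using elim(1) z by blast
          moreover have "norm w \<le> norm z + dist z w"
            using norm_triangle_ineq[of z "w - z"] by (simp add: dist_norm norm_minus_commute)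
          moreover have "norm (z - of_real lam0) \<le> norm (w - of_real lam0) + dist z w"
            using norm_triangle_ineq[of "w - of_real lam0" "z - w"] by (simp add: dist_norm)
          moreover have "lam0 \<le> Re w" by (simp add: w_def)
          ultimately have "w \<in> K" using far zw small unfolding K_def by simp
          have "F \<epsilon> z \<noteq> 0"
          proof (rule zero_free)
            show "\<bar>\<epsilon>\<bar> < d" using elim(2,3) by simp
            show "dist z w < d" using zw small by simp
          qed fact
          then show False using z(3) by contradiction
        qed
      qed
    qed
  qed
qed

section \<open>An a priori bound on the roots of det Delta_e\<close>

lemma Lexp_bounded_right_halfplane:
  assumes L: "bounded_linear_delay \<tau> L" and tau: "\<tau> > 0"
  shows "\<exists>C. \<forall>z i j. 0 \<le> Re z \<longrightarrow> norm (Lexp L z $ i $ j) \<le> C"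
proof -
  obtain K where K: "\<And>i j u M. continuous_on {-\<tau>..0} u \<Longrightarrow> (\<forall>\<theta>\<in>{-\<tau>..0}. norm (u \<theta>) \<le> M)
          \<Longrightarrow> norm (Lc_entry L i j u) \<le> K * M" using Lc_entry_bound[OF L tau] by blast
  have "norm (Lexp L z $ i $ j) \<le> K * 1" if "0 \<le> Re z" for z i j
    unfolding Lexp_entry
    by (rule K) (use that in \<open>auto intro!: continuous_intros simp: norm_exp_eq_Re mult_nonneg_nonpos\<close>)
  then show ?thesis by blast
qed

text \<open>If mat a + M is singular, then a is an eigenvalue of -M, hence bounded by N max |M_ij|.\<close>
lemma singular_shift_bound:
  fixes M :: "complex^'n^'n"
  assumes C: "\<And>i j. norm (M $ i $ j) \<le> C" and d: "det (mat a + M) = 0"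
  shows "norm a \<le> real CARD('n) * C"
proof -
  let ?A = "mat a + M"
  have "\<not> inj ((*v) ?A)"
    using det_nz_iff_inj_gen[OF matrix_vector_mul_linear_gen, of ?A] d by simp
  then obtain x y where xy: "x \<noteq> y" "?A *v x = ?A *v y" unfolding inj_def by blast
  define v where "v = x - y"
  have v0: "v \<noteq> 0" using xy by (simp add: v_def)
  have Av: "?A *v v = 0" using xy by (simp add: v_def matrix_vector_mult_diff_distrib)
  define m where "m = Max (range (\<lambda>j. norm (v $ j)))"
  have "m \<in> range (\<lambda>j. norm (v $ j))" unfolding m_def by (rule Max_in) auto
  then obtain i where im: "norm (v $ i) = m" by auto
  have mj: "norm (v $ j) \<le> m" for j unfolding m_def by (rule Max_ge) auto
  have "m > 0"
  proof -
    obtain j where "v $ j \<noteq> 0" using v0 by (auto simp: vec_eq_iff)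
    then show ?thesis using mj[of j] by (meson less_le_trans zero_less_norm_iff)
  qed
  have "(?A *v v) $ i = (\<Sum>j\<in>UNIV. (if i = j then a * v $ j else 0) + M $ i $ j * v $ j)"
    unfolding matrix_vector_mult_def mat_def by (auto intro!: sum.cong simp: distrib_right)
  also have "\<dots> = a * v $ i + (\<Sum>j\<in>UNIV. M $ i $ j * v $ j)"
    by (simp add: sum.distrib)
  finally have "(?A *v v) $ i = a * v $ i + (\<Sum>j\<in>UNIV. M $ i $ j * v $ j)" .
  then have "a * v $ i = - (\<Sum>j\<in>UNIV. M $ i $ j * v $ j)"
    using Av by (simp add: eq_neg_iff_add_eq_0)
  then have "norm a * m = norm (\<Sum>j\<in>UNIV. M $ i $ j * v $ j)"
    using im by (metis norm_minus_cancel norm_mult)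
  also have "\<dots> \<le> (\<Sum>j\<in>(UNIV::'n set). C * m)"
    by (intro sum_norm_le) (auto simp: norm_mult intro!: mult_mono C mj order_trans[OF norm_ge_zero C])
  also have "\<dots> = real CARD('n) * C * m" by simp
  finally show ?thesis using \<open>m > 0\<close> by simp
qed

text \<open>If |e z^2 - z| <= B and Re z <= X with e small, then |z| <= 2B: either |e z| <= 1/2, or
  e z is close to 1, which forces Re z to be of size 1/e.\<close>
lemma quadratic_root_bound:
  fixes z :: complex and e B X :: real
  assumes e: "e > 0" and B: "B \<ge> 0" and X: "X \<ge> 0" and small: "e * (X + 2*B + 1) < 1"
    and rz: "Re z \<le> X" and nb: "norm (of_real e * z^2 - z) \<le> B"
  shows "norm z \<le> 2 * B"
proof -
  have fac: "of_real e * z^2 - z = z * (of_real e * z - 1)" by (simp add: power2_eq_square algebra_simps)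
  have nb2: "norm z * norm (of_real e * z - 1) \<le> B" using nb unfolding fac norm_mult .
  show ?thesis
  proof (cases "norm (of_real e * z) \<le> 1/2")
    case True
    have "1 - norm (of_real e * z) \<le> norm (of_real e * z - 1)"
      using norm_triangle_ineq3[of 1 "of_real e * z"] by (simp add: norm_minus_commute)
    then have "norm z * (1/2) \<le> norm z * norm (of_real e * z - 1)"
      using True by (intro mult_left_mono) auto
    then show ?thesis using nb2 by linarith
  next
    case False
    then have nz: "e * norm z > 1/2" using e by (simp add: norm_mult)
    then have pz: "norm z > 0" by (cases "z = 0") auto
    have "norm (of_real e * z - 1) \<le> B / norm z" using nb2 pz by (simp add: field_simps)
    also have "\<dots> \<le> B * (2 * e)"
    proof -
      have "1 / norm z < 2 * e" using nz pz by (simp add: field_simps)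
      then have "B * (1 / norm z) \<le> B * (2 * e)" using B by (intro mult_left_mono) auto
      then show ?thesis by simp
    qed
    finally have w: "norm (of_real e * z - 1) \<le> 2 * B * e" by simp
    have "1 - e * Re z \<le> norm (of_real e * z - 1)"
      using abs_Re_le_cmod[of "of_real e * z - 1"] by simp
    then have "1 - e * Re z \<le> 2 * B * e" using w by linarith
    moreover have "e * Re z \<le> e * X" using rz e by simp
    ultimately have "1 \<le> e * (X + 2 * B)" by (simp add: algebra_simps)
    then show ?thesis using small e by (simp add: algebra_simps)
  qed
qed

lemma roots_bounded:
  fixes L :: "(real \<Rightarrow> real^'n) \<Rightarrow> real^'n"
  assumes L: "bounded_linear_delay \<tau> L" and tau: "\<tau> > 0"
  shows "\<exists>R. \<forall>X. \<forall>\<^sub>F \<epsilon> in at_right 0. \<forall>z.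
           0 \<le> Re z \<longrightarrow> Re z \<le> X \<longrightarrow> det (Delta L \<epsilon> z) = 0 \<longrightarrow> norm z \<le> R"
proof -
  obtain C where C: "\<And>z i j. 0 \<le> Re z \<Longrightarrow> norm (Lexp L z $ i $ j) \<le> C"
    using Lexp_bounded_right_halfplane[OF L tau] by blast
  define B where "B = real CARD('n) * max C 0"
  have B: "B \<ge> 0" by (simp add: B_def)
  have root: "norm (of_real (\<epsilon>^2) * z^2 - z) \<le> B" if "0 \<le> Re z" "det (Delta L \<epsilon> z) = 0" for \<epsilon> z
  proof -
    have entries: "norm (Lexp L z $ i $ j) \<le> max C 0" for i j
      using C[OF that(1)] by (simp add: le_max_iff_disj)
    have "det (mat (of_real (\<epsilon>^2) * z^2 - z) + Lexp L z) = 0"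
      using that(2) by (simp add: Delta_def)
    then show ?thesis unfolding B_def by (rule singular_shift_bound[OF entries])
  qed
  have "\<forall>\<^sub>F \<epsilon> in at_right 0. \<forall>z. 0 \<le> Re z \<longrightarrow> Re z \<le> X \<longrightarrow> det (Delta L \<epsilon> z) = 0 \<longrightarrow> norm z \<le> 2 * B"
    for X
  proof -
    define X' where "X' = max X 0"
    have "((\<lambda>\<epsilon>. \<epsilon>^2 * (X' + 2*B + 1)) \<longlongrightarrow> 0) (at_right (0::real))"
      by (auto intro!: tendsto_eq_intros)
    then have "\<forall>\<^sub>F \<epsilon> in at_right 0. \<epsilon>^2 * (X' + 2*B + 1) < 1"
      by (rule order_tendstoD) simp
    with eventually_at_right_less[of 0] show ?thesis
    proof eventually_elim
      case (elim \<epsilon>)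
      then show ?case using B root
        by (auto intro!: quadratic_root_bound[of "\<epsilon>^2" B X'] simp: X'_def)
    qed
  qed
  then show ?thesis by blast
qed

theorem lemma4p1:
  fixes L :: "(real \<Rightarrow> real^'n) \<Rightarrow> real^'n"
    and \<tau> lam0 :: real and lam :: "real \<Rightarrow> real"
  assumes tau: "\<tau> > 0"
    and L: "bounded_linear_delay \<tau> L"
    and pos: "lam0 > 0"
    and root0: "det (Delta L 0 (of_real lam0)) = 0"
    and simple0: "deriv (\<lambda>z. det (Delta L 0 z)) (of_real lam0) \<noteq> 0"
    and dominant: "\<And>z. det (Delta L 0 z) = 0 \<Longrightarrow> z \<noteq> of_real lam0 \<Longrightarrow> Re z < lam0"
    and lam_root: "\<forall>\<^sub>F \<epsilon> in at_right 0. det (Delta L \<epsilon> (of_real (lam \<epsilon>))) = 0"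
    and lam_simple: "\<forall>\<^sub>F \<epsilon> in at_right 0.
                       deriv (\<lambda>z. det (Delta L \<epsilon> z)) (of_real (lam \<epsilon>)) \<noteq> 0"
    and lam_lim: "(lam \<longlongrightarrow> lam0) (at_right 0)"
  shows "\<exists>\<delta>0>0. \<forall>\<delta>. 0 < \<delta> \<and> \<delta> < \<delta>0 \<longrightarrow> (\<forall>\<delta>1>0. \<exists>\<epsilon>0>0. \<forall>\<epsilon>. 0 < \<epsilon> \<and> \<epsilon> < \<epsilon>0 \<longrightarrow>
           det (Delta L \<epsilon> (of_real (lam \<epsilon>))) = 0 \<and>
           (\<forall>z. lam0 - \<delta> \<le> Re z \<and> Re z \<le> lam0 + \<delta>1 \<and> det (Delta L \<epsilon> z) = 0
                \<longrightarrow> z = of_real (lam \<epsilon>)))"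
proof -
  let ?F = "\<lambda>\<epsilon> z. det (Delta L \<epsilon> z)"
  have deriv: "\<And>\<epsilon> z. (?F \<epsilon> has_field_derivative charf' L \<epsilon> z) (at z)"
    unfolding det_Delta by (rule charf_deriv[OF L tau])
  have cont: "continuous_on UNIV (\<lambda>p. ?F (fst p) (snd p))"
    unfolding det_Delta by (rule charf_cont(1)[OF L tau])
  have cont': "isCont (\<lambda>p. charf' L (fst p) (snd p)) (0, of_real lam0)"
    using charf_cont(2)[OF L tau, of UNIV] by (simp add: continuous_on_eq_continuous_at)
  have simple: "charf' L 0 (of_real lam0) \<noteq> 0"
    using simple0 DERIV_imp_deriv[OF deriv] by simp
  obtain r where r: "r > 0" and near: "\<forall>\<^sub>F \<epsilon> in at_right 0. \<forall>z.
      norm (z - of_real lam0) < r \<longrightarrow> ?F \<epsilon> z = 0 \<longrightarrow> z = of_real (lam \<epsilon>)"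
    using eventually_unique_root_near[OF deriv cont' simple lam_root tendsto_of_real[OF lam_lim]]
    by blast
  obtain R where "\<And>X. \<forall>\<^sub>F \<epsilon> in at_right 0. \<forall>z. 0 \<le> Re z \<longrightarrow> Re z \<le> X \<longrightarrow> ?F \<epsilon> z = 0 \<longrightarrow> norm z \<le> R"
    using roots_bounded[OF L tau] by blast
  from eventually_roots_in_strip_near[OF cont dominant this pos r]
  obtain \<delta>0 where "\<delta>0 > 0" and far: "\<forall>\<delta> \<delta>1. 0 < \<delta> \<longrightarrow> \<delta> < \<delta>0 \<longrightarrow> (\<forall>\<^sub>F \<epsilon> in at_right 0. \<forall>z.
      lam0 - \<delta> \<le> Re z \<longrightarrow> Re z \<le> lam0 + \<delta>1 \<longrightarrow> ?F \<epsilon> z = 0 \<longrightarrow> norm (z - of_real lam0) < r)"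
    by blast
  show ?thesis
  proof (rule exI[of _ \<delta>0], intro conjI allI impI)
    fix \<delta> \<delta>1 :: real assume \<delta>: "0 < \<delta> \<and> \<delta> < \<delta>0" and "0 < \<delta>1"
    have "\<forall>\<^sub>F \<epsilon> in at_right 0. ?F \<epsilon> (of_real (lam \<epsilon>)) = 0 \<and> (\<forall>z.
        lam0 - \<delta> \<le> Re z \<and> Re z \<le> lam0 + \<delta>1 \<and> ?F \<epsilon> z = 0 \<longrightarrow> z = of_real (lam \<epsilon>))"
      using lam_root near far[rule_format, of \<delta> \<delta>1, OF \<delta>[THEN conjunct1] \<delta>[THEN conjunct2]]
      by eventually_elim auto
    then show "\<exists>\<epsilon>0>0. \<forall>\<epsilon>. 0 < \<epsilon> \<and> \<epsilon> < \<epsilon>0 \<longrightarrow> ?F \<epsilon> (of_real (lam \<epsilon>)) = 0 \<and> (\<forall>z.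
        lam0 - \<delta> \<le> Re z \<and> Re z \<le> lam0 + \<delta>1 \<and> ?F \<epsilon> z = 0 \<longrightarrow> z = of_real (lam \<epsilon>))"
      unfolding eventually_at_right_field by auto
  qed (fact \<open>\<delta>0 > 0\<close>)
qed

end
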